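(* Let $R$ be an almost Dedekind domain and let $I$ be a nonzero integral ideal of $R$. The following are equivalent: (i) $\nu_I$ is continuous on $\mathcal{M}$; (ii) $I=J_1\cdots J_k$ for some continuous radical ideals $J_1\subseteq\cdots\subseteq J_k$; (iii) $I=J_1\cdots J_k$ for some continuous radical ideals $J_1,\ldots,J_k$.
   Context: $R$ almost Dedekind: $R_M$ is a DVR with valuation $v_M$ for every maximal $M$. $\mathcal{M}$ is $\mathrm{Max}(R)$ with the inverse topology (restriction of the coarsest topology on $\mathrm{Spec}(R)$ in which every Zariski-open Zariski-compact set is closed). For a nonzero fractional ideal $I$, $\nu_I:\mathcal{M}\to\mathbb{Z}$, $\nu_I(M)=\inf\{v_M(i)\mid i\in I\setminus\{0\}\}$; $\mathbb{Z}$ has the discrete topology; an ideal $J$ is continuous if $\nu_J$ is continuous. *)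

theory Defs
  imports "HOL-Analysis.Analysis" "HOL-Computational_Algebra.Fraction_Field"
begin

text \<open>The domain R is the whole carrier of a type of class idom.\<close>

definition is_ideal :: "'a::idom set \<Rightarrow> bool" where
  "is_ideal I \<longleftrightarrow> 0 \<in> I \<and> (\<forall>a\<in>I. \<forall>b\<in>I. a + b \<in> I) \<and> (\<forall>r. \<forall>a\<in>I. r * a \<in> I)"

definition prime_ideal :: "'a::idom set \<Rightarrow> bool" where
  "prime_ideal P \<longleftrightarrow> is_ideal P \<and> P \<noteq> UNIV \<and> (\<forall>a b. a * b \<in> P \<longrightarrow> a \<in> P \<or> b \<in> P)"

definition maximal_ideal :: "'a::idom set \<Rightarrow> bool" where
  "maximal_ideal M \<longleftrightarrow> is_ideal M \<and> M \<noteq> UNIV \<and>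
     (\<forall>J. is_ideal J \<and> M \<subseteq> J \<longrightarrow> J = M \<or> J = UNIV)"

definition Spec :: "'a::idom set set" where
  "Spec = {P. prime_ideal P}"

definition MaxSpec :: "'a::idom set set" where
  "MaxSpec = {M. maximal_ideal M}"

definition radical_ideal :: "'a::idom set \<Rightarrow> bool" where
  "radical_ideal J \<longleftrightarrow> is_ideal J \<and> (\<forall>x n. x ^ n \<in> J \<longrightarrow> x \<in> J)"

definition ideal_gen :: "'a::idom set \<Rightarrow> 'a set" where
  "ideal_gen S = \<Inter>{J. is_ideal J \<and> S \<subseteq> J}"

definition ideal_prod :: "'a::idom set \<Rightarrow> 'a set \<Rightarrow> 'a set" where
  "ideal_prod A B = ideal_gen {a * b | a b. a \<in> A \<and> b \<in> B}"

definition ideal_prod_list :: "'a::idom set list \<Rightarrow> 'a set" where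
  "ideal_prod_list Js = foldr ideal_prod Js UNIV"

definition zariski :: "'a::idom set topology" where
  "zariski = topology_generated_by {{P \<in> Spec. f \<notin> P} | f. True}"

text \<open>Inverse topology: coarsest topology in which every Zariski-open Zariski-compact
  subset of Spec(R) is closed, i.e. generated by the complements of such sets.\<close>
definition inverse_topology :: "'a::idom set topology" where
  "inverse_topology = topology_generated_by
     {Spec - U | U. openin zariski U \<and> compactin zariski U}"

definition Max_inverse :: "'a::idom set topology" where
  "Max_inverse = subtopology inverse_topology MaxSpec"

definition localization :: "'a::idom set \<Rightarrow> 'a fract set" where
  "localization M = {Fract a b | a b. b \<notin> M}"

definition discrete_valuation :: "('a::idom fract \<Rightarrow> int) \<Rightarrow> bool" where
  "discrete_valuation v \<longleftrightarrow>
     (\<forall>x y. x \<noteq> 0 \<longrightarrow> y \<noteq> 0 \<longrightarrow> v (x * y) = v x + v y) \<and>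
     (\<forall>x y. x \<noteq> 0 \<longrightarrow> y \<noteq> 0 \<longrightarrow> x + y \<noteq> 0 \<longrightarrow> min (v x) (v y) \<le> v (x + y)) \<and>
     v ` (UNIV - {0}) = UNIV"

definition DVR_with_valuation :: "'a::idom fract set \<Rightarrow> ('a fract \<Rightarrow> int) \<Rightarrow> bool" where
  "DVR_with_valuation S v \<longleftrightarrow> discrete_valuation v \<and> S = insert 0 {x. x \<noteq> 0 \<and> 0 \<le> v x}"

definition almost_Dedekind :: "'a::idom itself \<Rightarrow> bool" where
  "almost_Dedekind _ \<longleftrightarrow>
     (\<forall>M::'a set. maximal_ideal M \<longrightarrow> (\<exists>v. DVR_with_valuation (localization M) v))"

definition val :: "'a::idom set \<Rightarrow> 'a fract \<Rightarrow> int" where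
  "val M = (SOME v. DVR_with_valuation (localization M) v)"

definition nu :: "'a::idom set \<Rightarrow> 'a set \<Rightarrow> int" where
  "nu I M = Inf {val M (Fract i 1) | i. i \<in> I \<and> i \<noteq> 0}"

definition continuous_ideal :: "'a::idom set \<Rightarrow> bool" where
  "continuous_ideal J \<longleftrightarrow>
     continuous_map Max_inverse (discrete_topology (UNIV :: int set)) (nu J)"

end

(*
  Since each R_M is a DVR, the local-global principle shows that a nonzero ideal is
  determined by its valuation function nu_I, and nu is additive on products; this
  gives (iii) => (i).

  For (i) => (ii), continuity first forces nu_I to be bounded: if nu_I(M_k) > k for
  maximal ideals M_k, a Zorn argument yields a prime ideal P containing I, hence
  maximal, every finite subset of which lies in infinitely many M_k, whereas nu_I
  is constant on an inverse-topology neighbourhood {N. F <= N} of P with F finite.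
  If nu_I <= k, the radical ideals J_t = Inter {M. t <= nu_I(M)} increase with t and
  satisfy nu_{J_t}(M) = [t <= nu_I(M)], so nu_I = nu_{J_1} + ... + nu_{J_k} and
  I = J_1 ... J_k; each nu_{J_t} is continuous because nu_I is.
*)

theory Submission
  imports Defs
begin

section \<open>Ideals of an integral domain\<close>

lemma is_ideal_0: "is_ideal I \<Longrightarrow> 0 \<in> I"
  by (simp add: is_ideal_def)

lemma is_ideal_add: "is_ideal I \<Longrightarrow> a \<in> I \<Longrightarrow> b \<in> I \<Longrightarrow> a + b \<in> I"
  by (simp add: is_ideal_def)

lemma is_ideal_mult_left: "is_ideal I \<Longrightarrow> a \<in> I \<Longrightarrow> r * a \<in> I"
  by (simp add: is_ideal_def)

lemma is_ideal_mult_right: "is_ideal I \<Longrightarrow> a \<in> I \<Longrightarrow> a * r \<in> I"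
  by (metis is_ideal_mult_left mult.commute)

lemma is_ideal_eq_UNIV: "is_ideal I \<Longrightarrow> 1 \<in> I \<Longrightarrow> I = UNIV"
  by (metis UNIV_eq_I is_ideal_mult_right mult_1)

lemma is_ideal_UNIV: "is_ideal UNIV"
  by (simp add: is_ideal_def)

lemma is_ideal_Inter: "(\<And>J. J \<in> \<A> \<Longrightarrow> is_ideal J) \<Longrightarrow> is_ideal (\<Inter>\<A>)"
  by (simp add: is_ideal_def)

definition ideal_adjoin :: "'a::idom set \<Rightarrow> 'a \<Rightarrow> 'a set" where
  "ideal_adjoin I a = {i + r * a | i r. i \<in> I}"

lemma ideal_adjoinI: "i \<in> I \<Longrightarrow> x = i + r * a \<Longrightarrow> x \<in> ideal_adjoin I a"
  unfolding ideal_adjoin_def by blast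

lemma ideal_adjoinE:
  assumes "x \<in> ideal_adjoin I a"
  obtains i r where "i \<in> I" "x = i + r * a"
  using assms unfolding ideal_adjoin_def by blast

lemma is_ideal_ideal_adjoin:
  assumes "is_ideal I"
  shows "is_ideal (ideal_adjoin I a)"
  unfolding is_ideal_def
proof (intro conjI ballI allI)
  show "0 \<in> ideal_adjoin I a"
    by (rule ideal_adjoinI[OF is_ideal_0[OF assms], of _ 0]) simp
next
  fix x y assume "x \<in> ideal_adjoin I a" "y \<in> ideal_adjoin I a"
  then obtain i r j s where "i \<in> I" "j \<in> I" "x = i + r * a" "y = j + s * a"
    by (metis ideal_adjoinE)
  then have "i + j \<in> I" "x + y = (i + j) + (r + s) * a"
    using is_ideal_add[OF assms] by (auto simp: algebra_simps)
  then show "x + y \<in> ideal_adjoin I a"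
    by (rule ideal_adjoinI)
next
  fix s x assume "x \<in> ideal_adjoin I a"
  then obtain i r where "i \<in> I" "x = i + r * a"
    by (rule ideal_adjoinE)
  then have "s * i \<in> I" "s * x = s * i + (s * r) * a"
    using is_ideal_mult_left[OF assms] by (auto simp: algebra_simps)
  then show "s * x \<in> ideal_adjoin I a"
    by (rule ideal_adjoinI)
qed

lemma subset_ideal_adjoin: "I \<subseteq> ideal_adjoin I a"
  using ideal_adjoinI[of _ I _ 0 a] by auto

lemma mem_ideal_adjoin: "is_ideal I \<Longrightarrow> a \<in> ideal_adjoin I a"
  using ideal_adjoinI[OF is_ideal_0, of I a 1 a] by simp

lemma is_ideal_Union_chain:
  assumes "Ch \<noteq> {}" "subset.chain \<A> Ch" "\<And>J. J \<in> \<A> \<Longrightarrow> is_ideal J"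
  shows "is_ideal (\<Union>Ch)"
proof -
  have ideal: "\<And>J. J \<in> Ch \<Longrightarrow> is_ideal J" and cmp: "\<And>X Y. X \<in> Ch \<Longrightarrow> Y \<in> Ch \<Longrightarrow> X \<subseteq> Y \<or> Y \<subseteq> X"
    using assms(2,3) by (auto simp: subset_chain_def)
  show ?thesis
    unfolding is_ideal_def
  proof (intro conjI ballI allI)
    show "0 \<in> \<Union>Ch"
      using assms(1) ideal is_ideal_0 by blast
  next
    fix a b assume "a \<in> \<Union>Ch" "b \<in> \<Union>Ch"
    then obtain X Y where "X \<in> Ch" "Y \<in> Ch" "a \<in> X" "b \<in> Y"
      by blast
    then show "a + b \<in> \<Union>Ch"
      using cmp[of X Y] ideal is_ideal_add by (metis UnionI subsetD)
  next
    fix r a assume "a \<in> \<Union>Ch"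
    then show "r * a \<in> \<Union>Ch"
      using ideal is_ideal_mult_left by blast
  qed
qed

lemma ideal_Zorn:
  assumes "\<A> \<noteq> {}" "\<And>J. J \<in> \<A> \<Longrightarrow> is_ideal J"
    and "\<And>Ch. Ch \<noteq> {} \<Longrightarrow> subset.chain \<A> Ch \<Longrightarrow> is_ideal (\<Union>Ch) \<Longrightarrow> \<Union>Ch \<in> \<A>"
  obtains P where "P \<in> \<A>" "\<And>J. J \<in> \<A> \<Longrightarrow> P \<subseteq> J \<Longrightarrow> J = P"
proof -
  have "\<exists>P\<in>\<A>. \<forall>J\<in>\<A>. P \<subseteq> J \<longrightarrow> J = P"
  proof (rule subset_Zorn_nonempty[OF assms(1)])
    fix Ch assume "Ch \<noteq> {}" "subset.chain \<A> Ch"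
    then show "\<Union>Ch \<in> \<A>"
      using assms(3) is_ideal_Union_chain assms(2) by blast
  qed
  then show ?thesis
    using that by blast
qed

lemma maximal_ideal_imp_prime:
  assumes "maximal_ideal M"
  shows "prime_ideal M"
proof -
  have M: "is_ideal M" "M \<noteq> UNIV"
    using assms by (auto simp: maximal_ideal_def)
  have "b \<in> M" if ab: "a * b \<in> M" and a: "a \<notin> M" for a b
  proof -
    have "ideal_adjoin M a = M \<or> ideal_adjoin M a = UNIV"
      using assms is_ideal_ideal_adjoin[OF M(1)] subset_ideal_adjoin unfolding maximal_ideal_def by blast
    then have "1 \<in> ideal_adjoin M a"
      using a mem_ideal_adjoin[OF M(1), of a] by auto
    then obtain m r where mr: "m \<in> M" "1 = m + r * a"
      by (rule ideal_adjoinE)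
    have "b = (m + r * a) * b"
      by (simp flip: mr(2))
    also have "\<dots> = m * b + r * (a * b)"
      by (simp add: algebra_simps)
    finally show "b \<in> M"
      using is_ideal_add[OF M(1) is_ideal_mult_right[OF M(1) mr(1), of b] is_ideal_mult_left[OF M(1) ab, of r]]
      by simp
  qed
  then show ?thesis
    using M unfolding prime_ideal_def by blast
qed

lemma prime_ideal_one_notin: "prime_ideal P \<Longrightarrow> 1 \<notin> P"
  unfolding prime_ideal_def using is_ideal_eq_UNIV[of P] by auto

lemma prime_ideal_mult: "prime_ideal P \<Longrightarrow> a * b \<in> P \<Longrightarrow> a \<in> P \<or> b \<in> P"
  unfolding prime_ideal_def by blast

lemma prime_ideal_power:
  assumes "prime_ideal P" "x ^ n \<in> P"
  shows "x \<in> P"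
  using assms(2)
proof (induction n)
  case 0
  then show ?case
    using prime_ideal_one_notin[OF assms(1)] by simp
next
  case (Suc n)
  then show ?case
    using prime_ideal_mult[OF assms(1), of x "x ^ n"] by auto
qed

lemma prime_ideal_prod_notin:
  assumes "prime_ideal P" "finite F" "\<And>f. f \<in> F \<Longrightarrow> b f \<notin> P"
  shows "prod b F \<notin> P"
  using assms(2,3)
proof (induction F rule: finite_induct)
  case empty
  then show ?case
    using prime_ideal_one_notin[OF assms(1)] by simp
next
  case (insert f F)
  then show ?case
    using prime_ideal_mult[OF assms(1), of "b f" "prod b F"] by auto
qed

lemma radical_ideal_Inter_primes:
  assumes "\<And>P. P \<in> \<P> \<Longrightarrow> prime_ideal P"
  shows "radical_ideal (\<Inter>\<P>)"
  unfolding radical_ideal_def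
proof (intro conjI allI impI)
  show "is_ideal (\<Inter>\<P>)"
    using assms is_ideal_Inter unfolding prime_ideal_def by blast
  show "x \<in> \<Inter>\<P>" if "x ^ n \<in> \<Inter>\<P>" for x n
  proof
    fix P assume "P \<in> \<P>"
    then show "x \<in> P"
      using that prime_ideal_power[OF assms] by blast
  qed
qed

lemma prime_ideal_MaxSpec: "M \<in> MaxSpec \<Longrightarrow> prime_ideal M"
  unfolding MaxSpec_def by (simp add: maximal_ideal_imp_prime)

lemma MaxSpec_subset_Spec: "MaxSpec \<subseteq> Spec"
  unfolding MaxSpec_def Spec_def using maximal_ideal_imp_prime by blast

lemma is_ideal_colon:
  assumes "is_ideal J"
  shows "is_ideal {r. r * z \<in> J}"
  unfolding is_ideal_def
proof (intro conjI ballI allI)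
  show "0 \<in> {r. r * z \<in> J}"
    using is_ideal_0[OF assms] by simp
  show "a + b \<in> {r. r * z \<in> J}" if "a \<in> {r. r * z \<in> J}" "b \<in> {r. r * z \<in> J}" for a b
    using that is_ideal_add[OF assms, of "a * z" "b * z"] by (simp add: distrib_right)
  show "s * a \<in> {r. r * z \<in> J}" if "a \<in> {r. r * z \<in> J}" for s a
    using that is_ideal_mult_left[OF assms, of "a * z" s] by (simp add: mult.assoc)
qed

lemma ex_maximal_ideal_superset:
  assumes "is_ideal C" "C \<noteq> UNIV"
  obtains M where "maximal_ideal M" "C \<subseteq> M"
proof -
  define \<A> where "\<A> = {J. is_ideal J \<and> C \<subseteq> J \<and> 1 \<notin> J}"
  have "C \<in> \<A>"
    using assms is_ideal_eq_UNIV[of C] unfolding \<A>_def by blast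
  moreover have "is_ideal J" if "J \<in> \<A>" for J
    using that unfolding \<A>_def by blast
  moreover have "\<Union>Ch \<in> \<A>" if "Ch \<noteq> {}" "subset.chain \<A> Ch" "is_ideal (\<Union>Ch)" for Ch
  proof -
    have "C \<subseteq> \<Union>Ch" "1 \<notin> \<Union>Ch"
      using that(1,2) unfolding \<A>_def subset_chain_def by blast+
    then show ?thesis
      using that(3) unfolding \<A>_def by blast
  qed
  ultimately obtain M where M: "M \<in> \<A>" and max: "\<And>J. J \<in> \<A> \<Longrightarrow> M \<subseteq> J \<Longrightarrow> J = M"
    by (metis empty_iff ideal_Zorn)
  have "maximal_ideal M"
    unfolding maximal_ideal_def
  proof (intro conjI allI impI)
    show "is_ideal M" "M \<noteq> UNIV"
      using M unfolding \<A>_def by auto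
  next
    fix J assume "is_ideal J \<and> M \<subseteq> J"
    then show "J = M \<or> J = UNIV"
      using max M is_ideal_eq_UNIV unfolding \<A>_def by blast
  qed
  then show ?thesis
    using M that unfolding \<A>_def by blast
qed

lemma is_ideal_ideal_gen: "is_ideal (ideal_gen S)"
  unfolding ideal_gen_def by (rule is_ideal_Inter) simp

lemma ideal_gen_superset: "S \<subseteq> ideal_gen S"
  unfolding ideal_gen_def by blast

lemma ideal_gen_least: "is_ideal K \<Longrightarrow> S \<subseteq> K \<Longrightarrow> ideal_gen S \<subseteq> K"
  unfolding ideal_gen_def by blast

lemma is_ideal_ideal_prod: "is_ideal (ideal_prod A B)"
  unfolding ideal_prod_def by (rule is_ideal_ideal_gen)

lemma mult_mem_ideal_prod: "a \<in> A \<Longrightarrow> b \<in> B \<Longrightarrow> a * b \<in> ideal_prod A B"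
  unfolding ideal_prod_def by (rule subsetD[OF ideal_gen_superset]) blast

lemma ideal_prod_subset_ideal:
  "is_ideal K \<Longrightarrow> (\<And>a b. a \<in> A \<Longrightarrow> b \<in> B \<Longrightarrow> a * b \<in> K) \<Longrightarrow> ideal_prod A B \<subseteq> K"
  unfolding ideal_prod_def by (rule ideal_gen_least) auto

lemma nonzero_idealE:
  assumes "is_ideal I" "I \<noteq> {0}"
  obtains i where "i \<in> I" "i \<noteq> 0"
proof -
  have "\<not> I \<subseteq> {0}"
    using assms is_ideal_0[OF assms(1)] by blast
  then show ?thesis
    using that by blast
qed

lemma ideal_prod_nonzero:
  assumes "is_ideal A" "A \<noteq> {0}" "is_ideal B" "B \<noteq> {0}"
  shows "ideal_prod A B \<noteq> {0}"
proof -
  obtain a b where "a \<in> A" "a \<noteq> 0" "b \<in> B" "b \<noteq> 0"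
    using nonzero_idealE[OF assms(1,2)] nonzero_idealE[OF assms(3,4)] by metis
  then have "a * b \<in> ideal_prod A B" "a * b \<noteq> 0"
    by (simp_all add: mult_mem_ideal_prod)
  then show ?thesis
    by (metis singletonD)
qed

lemma ideal_prod_list_Nil [simp]: "ideal_prod_list [] = UNIV"
  and ideal_prod_list_Cons [simp]: "ideal_prod_list (J # Js) = ideal_prod J (ideal_prod_list Js)"
  by (simp_all add: ideal_prod_list_def)

lemma is_ideal_ideal_prod_list: "is_ideal (ideal_prod_list Js)"
  by (cases Js) (simp_all add: is_ideal_UNIV is_ideal_ideal_prod)

lemma ideal_prod_list_nonzero:
  "(\<And>J. J \<in> set Js \<Longrightarrow> is_ideal J \<and> J \<noteq> {0}) \<Longrightarrow> ideal_prod_list Js \<noteq> {0}"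
proof (induction Js)
  case Nil
  then show ?case
    by (metis UNIV_I ideal_prod_list_Nil singletonD zero_neq_one)
next
  case (Cons J Js)
  then have "is_ideal J" "J \<noteq> {0}" "ideal_prod_list Js \<noteq> {0}"
    by auto
  then show ?case
    by (simp add: ideal_prod_nonzero is_ideal_ideal_prod_list)
qed

section \<open>The valuation at a maximal ideal\<close>

lemma cInf_int_mem:
  fixes X :: "int set"
  assumes "X \<noteq> {}" "bdd_below X"
  shows "Inf X \<in> X"
proof -
  obtain x0 b where x0: "x0 \<in> X" and b: "\<And>x. x \<in> X \<Longrightarrow> b \<le> x"
    using assms unfolding bdd_below_def by blast
  define m where "m = Min (X \<inter> {b..x0})"
  have fin: "finite (X \<inter> {b..x0})" and ne: "x0 \<in> X \<inter> {b..x0}"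
    using x0 b by auto
  have "m \<in> X"
    using Min_in[OF fin] ne unfolding m_def by blast
  moreover have "m \<le> x" if "x \<in> X" for x
  proof (cases "x \<le> x0")
    case True
    then show ?thesis
      using Min_le[OF fin] that b unfolding m_def by simp
  next
    case False
    then show ?thesis
      using Min_le[OF fin ne] unfolding m_def by simp
  qed
  ultimately have "Inf X = m"
    by (rule cInf_eq_minimum)
  then show ?thesis
    using \<open>m \<in> X\<close> by simp
qed

lemma Fract_one_eq_0_iff [simp]: "Fract a 1 = 0 \<longleftrightarrow> a = 0"
  by (simp add: Zero_fract_def eq_fract)

locale almost_Dedekind_max_ideal =
  fixes M :: "'a::idom set"
  assumes almost_Dedekind: "almost_Dedekind TYPE('a)"
    and maximal: "maximal_ideal M"
begin

abbreviation v :: "'a \<Rightarrow> int" where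
  "v a \<equiv> val M (Fract a 1)"

lemma DVR_with_valuation_val: "DVR_with_valuation (localization M) (val M)"
proof -
  obtain w where "DVR_with_valuation (localization M) w"
    using almost_Dedekind maximal unfolding almost_Dedekind_def by blast
  then show ?thesis
    unfolding val_def by (rule someI[of "DVR_with_valuation (localization M)"])
qed

lemma discrete_valuation_val: "discrete_valuation (val M)"
  and localization_eq: "localization M = insert 0 {x. x \<noteq> 0 \<and> 0 \<le> val M x}"
  using DVR_with_valuation_val unfolding DVR_with_valuation_def by simp_all

lemma val_mult: "x \<noteq> 0 \<Longrightarrow> y \<noteq> 0 \<Longrightarrow> val M (x * y) = val M x + val M y"
  using discrete_valuation_val unfolding discrete_valuation_def by simp

lemma val_add: "x \<noteq> 0 \<Longrightarrow> y \<noteq> 0 \<Longrightarrow> x + y \<noteq> 0 \<Longrightarrow> min (val M x) (val M y) \<le> val M (x + y)"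
  using discrete_valuation_val unfolding discrete_valuation_def by simp

lemma val_surj: obtains w where "w \<noteq> 0" "val M w = k"
proof -
  have "k \<in> val M ` (UNIV - {0})"
    using discrete_valuation_val unfolding discrete_valuation_def by simp
  then show ?thesis
    using that by blast
qed

lemma prime_ideal_M: "prime_ideal M"
  by (rule maximal_ideal_imp_prime[OF maximal])

lemma is_ideal_M: "is_ideal M"
  using maximal unfolding maximal_ideal_def by blast

lemma one_notin_M: "1 \<notin> M"
  by (rule prime_ideal_one_notin[OF prime_ideal_M])

lemma zero_in_M: "0 \<in> M"
  by (rule is_ideal_0[OF is_ideal_M])

lemma val_one: "val M 1 = 0"
  using val_mult[of 1 1] by simp

lemma v_mult: "a \<noteq> 0 \<Longrightarrow> b \<noteq> 0 \<Longrightarrow> v (a * b) = v a + v b"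
  using val_mult[of "Fract a 1" "Fract b 1"] by simp

lemma v_add: "a \<noteq> 0 \<Longrightarrow> b \<noteq> 0 \<Longrightarrow> a + b \<noteq> 0 \<Longrightarrow> min (v a) (v b) \<le> v (a + b)"
  using val_add[of "Fract a 1" "Fract b 1"] by simp

lemma v_one: "v 1 = 0"
  using val_one by (simp add: One_fract_def)

lemma v_power: "a \<noteq> 0 \<Longrightarrow> v (a ^ n) = int n * v a"
  by (induction n) (simp_all add: v_one v_mult algebra_simps)

lemma val_Fract:
  assumes "a \<noteq> 0" "b \<noteq> 0"
  shows "val M (Fract a b) = v a - v b"
proof -
  have "Fract a b * Fract b 1 = Fract a 1"
    using assms(2) by (simp add: eq_fract)
  moreover have "Fract a b \<noteq> 0"
    using assms by (simp add: Zero_fract_def eq_fract)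
  ultimately show ?thesis
    using val_mult[of "Fract a b" "Fract b 1"] assms(2) by simp
qed

lemma Fract_mem_localization_iff:
  assumes "a \<noteq> 0" "b \<noteq> 0"
  shows "Fract a b \<in> localization M \<longleftrightarrow> v b \<le> v a"
  using assms val_Fract[OF assms] unfolding localization_eq by (simp add: Zero_fract_def eq_fract)

lemma Fract_mem_localizationE:
  assumes "Fract a b \<in> localization M" "b \<noteq> 0"
  obtains c d where "d \<notin> M" "a * d = c * b"
proof -
  obtain c d where "Fract a b = Fract c d" "d \<notin> M"
    using assms(1) unfolding localization_def by blast
  moreover have "d \<noteq> 0"
    using \<open>d \<notin> M\<close> zero_in_M by blast
  ultimately show ?thesis
    using that assms(2) eq_fract(1) by metis
qed

lemma v_nonneg: "a \<noteq> 0 \<Longrightarrow> 0 \<le> v a"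
  using Fract_mem_localization_iff[of a 1] one_notin_M v_one unfolding localization_def by auto

lemma v_pos_iff:
  assumes "a \<noteq> 0"
  shows "0 < v a \<longleftrightarrow> a \<in> M"
proof
  assume "0 < v a"
  show "a \<in> M"
  proof (rule ccontr)
    assume "a \<notin> M"
    then have "Fract 1 a \<in> localization M"
      unfolding localization_def by blast
    then have "v a \<le> 0"
      using Fract_mem_localization_iff[of 1 a] assms v_one by simp
    with \<open>0 < v a\<close> show False
      by simp
  qed
next
  assume "a \<in> M"
  show "0 < v a"
  proof (rule ccontr)
    assume "\<not> 0 < v a"
    then have "Fract 1 a \<in> localization M"
      using Fract_mem_localization_iff[of 1 a] assms v_one by simp
    then obtain c d where "d \<notin> M" "1 * d = c * a"
      using assms by (rule Fract_mem_localizationE)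
    then show False
      using is_ideal_mult_left[OF is_ideal_M \<open>a \<in> M\<close>, of c] by simp
  qed
qed

lemma v_eq_0_iff:
  assumes "a \<noteq> 0"
  shows "v a = 0 \<longleftrightarrow> a \<notin> M"
proof -
  have "0 \<le> v a" "0 < v a \<longleftrightarrow> a \<in> M"
    using assms by (simp_all add: v_nonneg v_pos_iff)
  then show ?thesis
    by auto
qed

lemma local_dvd_of_v_le:
  assumes "x \<noteq> 0" "z \<noteq> 0" "v x \<le> v z"
  obtains a b where "b \<notin> M" "z * b = x * a"
proof -
  have "Fract z x \<in> localization M"
    using Fract_mem_localization_iff assms by blast
  then obtain c d where "d \<notin> M" "z * d = c * x"
    using assms(1) by (rule Fract_mem_localizationE)
  then show ?thesis
    using that[of d c] by (simp add: mult.commute)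
qed

lemma v_power_ge:
  assumes "f \<in> M" "f \<noteq> 0"
  shows "int n \<le> v (f ^ n)"
proof -
  have "int n * 1 \<le> int n * v f"
    using v_pos_iff[OF assms(2)] assms(1) by (intro mult_left_mono) auto
  then show ?thesis
    using v_power[OF assms(2), of n] by simp
qed

lemma ex_uniformizer: obtains p where "p \<noteq> 0" "v p = 1"
proof -
  obtain w where w: "w \<noteq> 0" "val M w = 1"
    by (rule val_surj)
  then have "w \<in> localization M"
    unfolding localization_eq by simp
  then obtain a b where ab: "w = Fract a b" "b \<notin> M"
    unfolding localization_def by blast
  have "b \<noteq> 0"
    using ab(2) zero_in_M by blast
  moreover have "a \<noteq> 0"
    using w(1) ab(1) by (auto simp: Zero_fract_def eq_fract)
  moreover have "v b = 0"
    using v_eq_0_iff[OF \<open>b \<noteq> 0\<close>] ab(2) by simp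
  ultimately have "v a = 1"
    using val_Fract[of a b] w(2) ab(1) by simp
  then show ?thesis
    using that \<open>a \<noteq> 0\<close> by blast
qed

end

lemma almost_Dedekind_max_ideal_MaxSpec:
  "almost_Dedekind TYPE('a::idom) \<Longrightarrow> (M::'a set) \<in> MaxSpec \<Longrightarrow> almost_Dedekind_max_ideal M"
  unfolding MaxSpec_def by unfold_locales simp_all

context almost_Dedekind_max_ideal
begin

lemma bdd_below_v_image: "bdd_below {v i | i. i \<in> I \<and> i \<noteq> 0}"
  by (rule bdd_belowI[of _ 0]) (auto simp: v_nonneg)

lemma nu_le_v: "i \<in> I \<Longrightarrow> i \<noteq> 0 \<Longrightarrow> nu I M \<le> v i"
  unfolding nu_def by (rule cInf_lower[OF _ bdd_below_v_image]) blast

lemma nu_attained: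
  assumes "is_ideal I" "I \<noteq> {0}"
  obtains i where "i \<in> I" "i \<noteq> 0" "v i = nu I M"
proof -
  obtain i where "i \<in> I" "i \<noteq> 0"
    by (rule nonzero_idealE[OF assms])
  then have "{v i | i. i \<in> I \<and> i \<noteq> 0} \<noteq> {}"
    by auto
  then have "nu I M \<in> {v i | i. i \<in> I \<and> i \<noteq> 0}"
    unfolding nu_def by (rule cInf_int_mem[OF _ bdd_below_v_image])
  then obtain j where "j \<in> I" "j \<noteq> 0" "nu I M = v j"
    by auto
  then show ?thesis
    using that[of j] by simp
qed

lemma nu_nonneg:
  assumes "is_ideal I" "I \<noteq> {0}"
  shows "0 \<le> nu I M"
proof -
  obtain i where "i \<in> I" "i \<noteq> 0" "v i = nu I M"
    by (rule nu_attained[OF assms])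
  then show ?thesis
    using v_nonneg[of i] by simp
qed

lemma nu_UNIV: "nu UNIV M = 0"
proof -
  have "UNIV \<noteq> {0::'a}"
    by (metis UNIV_I singletonD zero_neq_one)
  then show ?thesis
    using nu_le_v[of 1 UNIV] v_one nu_nonneg[OF is_ideal_UNIV] by simp
qed

lemma nu_pos_iff_subset:
  assumes "is_ideal I" "I \<noteq> {0}"
  shows "0 < nu I M \<longleftrightarrow> I \<subseteq> M"
proof
  assume pos: "0 < nu I M"
  show "I \<subseteq> M"
  proof
    fix i assume "i \<in> I"
    show "i \<in> M"
    proof (cases "i = 0")
      case True
      then show ?thesis
        using zero_in_M by simp
    next
      case False
      then show ?thesis
        using nu_le_v[OF \<open>i \<in> I\<close> False] pos v_pos_iff[OF False] by simp
    qed
  qed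
next
  assume "I \<subseteq> M"
  obtain i where "i \<in> I" "i \<noteq> 0" "v i = nu I M"
    by (rule nu_attained[OF assms])
  then show "0 < nu I M"
    using \<open>I \<subseteq> M\<close> v_pos_iff[of i] by auto
qed

lemma mult_mem_of_nu_le_v:
  assumes "is_ideal I" "I \<noteq> {0}" "z \<noteq> 0 \<Longrightarrow> nu I M \<le> v z"
  obtains b where "b \<notin> M" "z * b \<in> I"
proof (cases "z = 0")
  case True
  then show ?thesis
    using that[of 1] one_notin_M is_ideal_0[OF assms(1)] by simp
next
  case False
  obtain i where i: "i \<in> I" "i \<noteq> 0" "v i = nu I M"
    by (rule nu_attained[OF assms(1,2)])
  then have "v i \<le> v z"
    using assms(3) False by simp
  then obtain a b where "b \<notin> M" "z * b = i * a"
    by (rule local_dvd_of_v_le[OF i(2) False])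
  then show ?thesis
    using that is_ideal_mult_right[OF assms(1) i(1), of a] by simp
qed

lemma is_ideal_v_ge: "is_ideal {z. z = 0 \<or> c \<le> v z}"
  unfolding is_ideal_def
proof (intro conjI ballI allI)
  show "0 \<in> {z. z = 0 \<or> c \<le> v z}"
    by simp
next
  fix x y assume x: "x \<in> {z. z = 0 \<or> c \<le> v z}" and y: "y \<in> {z. z = 0 \<or> c \<le> v z}"
  show "x + y \<in> {z. z = 0 \<or> c \<le> v z}"
  proof (cases "x = 0 \<or> y = 0 \<or> x + y = 0")
    case True
    then show ?thesis
      using x y by auto
  next
    case False
    then have "min (v x) (v y) \<le> v (x + y)"
      by (intro v_add) auto
    then show ?thesis
      using x y False by simp
  qed
next
  fix r x assume x: "x \<in> {z. z = 0 \<or> c \<le> v z}"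
  show "r * x \<in> {z. z = 0 \<or> c \<le> v z}"
  proof (cases "r = 0 \<or> x = 0")
    case True
    then show ?thesis
      by auto
  next
    case False
    then show ?thesis
      using x v_mult[of r x] v_nonneg[of r] by simp
  qed
qed

lemma nu_ideal_prod:
  assumes A: "is_ideal A" "A \<noteq> {0}" and B: "is_ideal B" "B \<noteq> {0}"
  shows "nu (ideal_prod A B) M = nu A M + nu B M"
proof (rule antisym)
  obtain a where a: "a \<in> A" "a \<noteq> 0" "v a = nu A M"
    by (rule nu_attained[OF A])
  obtain b where b: "b \<in> B" "b \<noteq> 0" "v b = nu B M"
    by (rule nu_attained[OF B])
  show "nu (ideal_prod A B) M \<le> nu A M + nu B M"
    using nu_le_v[OF mult_mem_ideal_prod[OF a(1) b(1)]] v_mult[OF a(2) b(2)] a b by simp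
next
  let ?K = "{z. z = 0 \<or> nu A M + nu B M \<le> v z}"
  have sub: "ideal_prod A B \<subseteq> ?K"
  proof (rule ideal_prod_subset_ideal[OF is_ideal_v_ge])
    fix a b assume ab: "a \<in> A" "b \<in> B"
    show "a * b \<in> ?K"
    proof (cases "a = 0 \<or> b = 0")
      case False
      then show ?thesis
        using nu_le_v[OF ab(1)] nu_le_v[OF ab(2)] v_mult[of a b] by simp
    qed auto
  qed
  obtain i where i: "i \<in> ideal_prod A B" "i \<noteq> 0" "v i = nu (ideal_prod A B) M"
    by (rule nu_attained[OF is_ideal_ideal_prod ideal_prod_nonzero[OF A B]])
  have "i \<in> ?K"
    using sub i(1) by (rule subsetD)
  then show "nu A M + nu B M \<le> nu (ideal_prod A B) M"
    using i(2,3) by simp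
qed

lemma nu_ideal_prod_list:
  "(\<And>J. J \<in> set Js \<Longrightarrow> is_ideal J \<and> J \<noteq> {0}) \<Longrightarrow> nu (ideal_prod_list Js) M = (\<Sum>J\<leftarrow>Js. nu J M)"
proof (induction Js)
  case Nil
  then show ?case
    by (simp add: nu_UNIV)
next
  case (Cons J Js)
  then have "is_ideal J" "J \<noteq> {0}" "ideal_prod_list Js \<noteq> {0}"
    using ideal_prod_list_nonzero[of Js] by simp_all
  then show ?case
    using Cons by (simp add: nu_ideal_prod is_ideal_ideal_prod_list)
qed

lemma nu_radical_ideal:
  assumes "radical_ideal J" "J \<noteq> {0}" "J \<subseteq> M"
  shows "nu J M = 1"
proof -
  have J: "is_ideal J"
    using assms(1) unfolding radical_ideal_def by blast
  obtain x where x: "x \<in> J" "x \<noteq> 0"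
    by (rule nonzero_idealE[OF J assms(2)])
  obtain p where p: "p \<noteq> 0" "v p = 1"
    by (rule ex_uniformizer)
  have "0 < v x"
    using v_pos_iff x assms(3) by blast
  then obtain m where "nat (v x) = Suc m"
    using gr0_implies_Suc[of "nat (v x)"] by auto
  then have vx: "v x = int (Suc m)"
    using \<open>0 < v x\<close> by simp
  have "v x \<le> v (p ^ Suc m)"
    using v_power[OF p(1), of "Suc m"] p(2) vx by (simp del: power_Suc)
  then obtain a b where b: "b \<notin> M" "p ^ Suc m * b = x * a"
    by (rule local_dvd_of_v_le[OF x(2) power_not_zero[OF p(1)]])
  have "(p * b) ^ Suc m = (p ^ Suc m * b) * b ^ m"
    by (simp add: power_mult_distrib mult_ac)
  also have "\<dots> = x * (a * b ^ m)"
    by (simp only: b(2) mult.assoc)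
  finally have "(p * b) ^ Suc m \<in> J"
    using is_ideal_mult_right[OF J x(1), of "a * b ^ m"] by simp
  then have "p * b \<in> J"
    using assms(1) unfolding radical_ideal_def by blast
  moreover have "b \<noteq> 0"
    using b(1) zero_in_M by blast
  moreover have "v (p * b) = 1"
    using v_mult[OF p(1) \<open>b \<noteq> 0\<close>] p(2) v_eq_0_iff[OF \<open>b \<noteq> 0\<close>] b(1) by simp
  ultimately have "nu J M \<le> 1"
    using nu_le_v[of "p * b" J] p(1) by simp
  moreover have "0 < nu J M"
    using nu_pos_iff_subset[OF J assms(2)] assms(3) by simp
  ultimately show ?thesis
    by simp
qed


lemma ex_notin_mult_powers_mem:
  assumes I: "is_ideal I" "I \<noteq> {0}" and F: "finite F" "F \<subseteq> M"
  obtains r where "r \<notin> M" "\<forall>f\<in>F. r * f ^ nat (nu I M) \<in> I"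
proof -
  let ?n = "nat (nu I M)"
  have "\<exists>b. b \<notin> M \<and> f ^ ?n * b \<in> I" if f: "f \<in> F" for f
  proof -
    have "int ?n \<le> v (f ^ ?n)" if "f ^ ?n \<noteq> 0"
    proof (cases "f = 0")
      case True
      then have "?n = 0"
        using that by (metis power_0_left)
      then show ?thesis
        using v_one by simp
    next
      case False
      show ?thesis
        by (rule v_power_ge[OF subsetD[OF F(2) f] False])
    qed
    then have "nu I M \<le> v (f ^ ?n)" if "f ^ ?n \<noteq> 0"
      using that nu_nonneg[OF I] by simp
    then obtain b where "b \<notin> M" "f ^ ?n * b \<in> I"
      by (rule mult_mem_of_nu_le_v[OF I])
    then show ?thesis
      by blast
  qed
  then obtain b where b: "\<And>f. f \<in> F \<Longrightarrow> b f \<notin> M \<and> f ^ ?n * b f \<in> I"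
    by metis
  have "prod b F \<notin> M"
    using prime_ideal_prod_notin[OF prime_ideal_M F(1)] b by blast
  moreover have "prod b F * f ^ ?n \<in> I" if f: "f \<in> F" for f
  proof -
    have "prod b F * f ^ ?n = prod b (F - {f}) * (f ^ ?n * b f)"
      by (simp add: prod.remove[OF F(1) f] mult_ac)
    moreover have "prod b (F - {f}) * (f ^ ?n * b f) \<in> I"
      using is_ideal_mult_left[OF I(1)] b[OF f] by blast
    ultimately show ?thesis
      by (simp only:)
  qed
  ultimately show ?thesis
    using that by blast
qed

end

section \<open>Ideals are determined by their valuation functions\<close>

text \<open>Local-global principle: the conductor of \<open>z\<close> into \<open>I'\<close> lies in no maximal ideal.\<close>

lemma ideal_subset_of_nu_le:
  assumes AD: "almost_Dedekind TYPE('a::idom)"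
    and I: "is_ideal I" "I \<noteq> {0}" and I': "is_ideal I'" "I' \<noteq> {0::'a}"
    and le: "\<And>M. maximal_ideal M \<Longrightarrow> nu I' M \<le> nu I M"
  shows "I \<subseteq> I'"
proof
  fix z assume z: "z \<in> I"
  have "{r. r * z \<in> I'} = UNIV"
  proof (rule ccontr)
    assume "{r. r * z \<in> I'} \<noteq> UNIV"
    then obtain M where M: "maximal_ideal M" "{r. r * z \<in> I'} \<subseteq> M"
      using ex_maximal_ideal_superset[OF is_ideal_colon[OF I'(1)]] by blast
    interpret almost_Dedekind_max_ideal M
      using AD M(1) by unfold_locales
    have "nu I' M \<le> v z" if "z \<noteq> 0"
      using le[OF M(1)] nu_le_v[OF z that] by simp
    then obtain b where "b \<notin> M" "z * b \<in> I'"
      by (rule mult_mem_of_nu_le_v[OF I'])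
    then show False
      using M(2) by (auto simp: mult.commute)
  qed
  then show "z \<in> I'"
    by (metis (mono_tags) UNIV_I mem_Collect_eq mult_1)
qed

lemma ideal_eq_of_nu_eq:
  assumes "almost_Dedekind TYPE('a::idom)"
    and "is_ideal I" "I \<noteq> {0}" "is_ideal I'" "I' \<noteq> {0::'a}"
    and "\<And>M. maximal_ideal M \<Longrightarrow> nu I M = nu I' M"
  shows "I = I'"
proof (rule subset_antisym)
  show "I \<subseteq> I'"
    by (rule ideal_subset_of_nu_le[OF assms(1-5)]) (simp add: assms(6))
  show "I' \<subseteq> I"
    by (rule ideal_subset_of_nu_le[OF assms(1,4,5,2,3)]) (simp add: assms(6))
qed

lemma nonzero_prime_ideal_imp_maximal:
  assumes AD: "almost_Dedekind TYPE('a::idom)"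
    and P: "prime_ideal P" and p: "p \<in> P" "p \<noteq> (0::'a)"
  shows "maximal_ideal P"
proof -
  have iP: "is_ideal P" "P \<noteq> UNIV"
    using P unfolding prime_ideal_def by auto
  obtain M where M: "maximal_ideal M" "P \<subseteq> M"
    by (rule ex_maximal_ideal_superset[OF iP])
  interpret almost_Dedekind_max_ideal M
    using AD M(1) by unfold_locales
  have "M \<subseteq> P"
  proof
    fix m assume m: "m \<in> M"
    show "m \<in> P"
    proof (cases "m = 0")
      case True
      then show ?thesis
        using is_ideal_0[OF iP(1)] by simp
    next
      case False
      define n where "n = nat (v p)"
      have "v p \<le> v (m ^ n)"
        using v_power_ge[OF m False, of n] v_nonneg[OF p(2)] unfolding n_def by simp
      then obtain a b where ab: "b \<notin> M" "m ^ n * b = p * a"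
        by (rule local_dvd_of_v_le[OF p(2) power_not_zero[OF False]])
      then have "m ^ n * b \<in> P" "b \<notin> P"
        using is_ideal_mult_right[OF iP(1) p(1)] M(2) by auto
      then show ?thesis
        using prime_ideal_mult[OF P] prime_ideal_power[OF P] by blast
    qed
  qed
  then show ?thesis
    using M(1) subset_antisym[OF M(2)] by simp
qed

section \<open>The inverse topology on the maximal spectrum\<close>

definition basic_open :: "'a::idom \<Rightarrow> 'a set set" where
  "basic_open f = {P \<in> Spec. f \<notin> P}"

definition zero_locus :: "'a::idom set \<Rightarrow> 'a set set" where
  "zero_locus F = {P \<in> Spec. F \<subseteq> P}"

lemma zariski_eq: "zariski = topology_generated_by (range basic_open)"
  unfolding zariski_def basic_open_def by (rule arg_cong[where f = topology_generated_by]) auto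

lemma openin_zariski_basic_open: "openin zariski (basic_open f)"
  unfolding zariski_eq by (rule topology_generated_by_Basis) simp

lemma basic_open_mult: "basic_open (f * g) = basic_open f \<inter> basic_open g"
proof -
  have "f * g \<notin> P \<longleftrightarrow> f \<notin> P \<and> g \<notin> P" if "prime_ideal P" for P
    using that prime_ideal_mult[OF that] is_ideal_mult_left[of P g f] is_ideal_mult_right[of P f g]
    unfolding prime_ideal_def by blast
  then show ?thesis
    unfolding basic_open_def Spec_def by blast
qed

lemma openin_zariski_imp_basic_nbhd:
  assumes "openin zariski U" "P \<in> U"
  obtains f where "P \<in> basic_open f" "basic_open f \<subseteq> U"
proof -
  have "generate_topology_on (range basic_open) U"
    using assms(1) unfolding zariski_eq by (rule openin_topology_generated_by)
  then have "\<forall>P\<in>U. \<exists>f. P \<in> basic_open f \<and> basic_open f \<subseteq> U"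
  proof (induction rule: generate_topology_on.induct)
    case (Int a b)
    show ?case
    proof
      fix P assume "P \<in> a \<inter> b"
      then obtain f g where "P \<in> basic_open f" "basic_open f \<subseteq> a" "P \<in> basic_open g" "basic_open g \<subseteq> b"
        using Int.IH by blast
      then show "\<exists>h. P \<in> basic_open h \<and> basic_open h \<subseteq> a \<inter> b"
        using basic_open_mult[of f g] by blast
    qed
  qed blast+
  then show ?thesis
    using assms(2) that by blast
qed

lemma compact_open_zariski_finite_union:
  assumes "openin zariski U" "compactin zariski U"
  obtains G where "finite G" "U = \<Union>(basic_open ` G)"
proof -
  have "U \<subseteq> \<Union>(basic_open ` {f. basic_open f \<subseteq> U})"
    using openin_zariski_imp_basic_nbhd[OF assms(1)] by blast
  then obtain \<F> where \<F>: "finite \<F>" "\<F> \<subseteq> basic_open ` {f. basic_open f \<subseteq> U}" "U \<subseteq> \<Union>\<F>"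
    using assms(2) openin_zariski_basic_open unfolding compactin_def by (metis (no_types, lifting) imageE)
  then obtain G where "G \<subseteq> {f. basic_open f \<subseteq> U}" "finite G" "\<F> = basic_open ` G"
    by (meson finite_subset_image)
  then show ?thesis
    using that \<F>(3) by blast
qed

lemma openin_inverse_topology_imp_zero_locus_nbhd:
  assumes "openin inverse_topology T" "P \<in> T"
  obtains F where "finite F" "F \<subseteq> P" "zero_locus F \<subseteq> T"
proof -
  have "generate_topology_on {Spec - U | U. openin zariski U \<and> compactin zariski U} T"
    using assms(1) unfolding inverse_topology_def by (rule openin_topology_generated_by)
  then have "\<forall>P\<in>T. \<exists>F. finite F \<and> F \<subseteq> P \<and> zero_locus F \<subseteq> T"
  proof (induction rule: generate_topology_on.induct)
    case (Int a b)
    show ?case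
    proof
      fix P assume "P \<in> a \<inter> b"
      then obtain F G where "finite F" "F \<subseteq> P" "zero_locus F \<subseteq> a" "finite G" "G \<subseteq> P" "zero_locus G \<subseteq> b"
        using Int.IH by (meson IntD1 IntD2)
      then show "\<exists>H. finite H \<and> H \<subseteq> P \<and> zero_locus H \<subseteq> a \<inter> b"
        by (intro exI[of _ "F \<union> G"]) (auto simp: zero_locus_def)
    qed
  next
    case (UN K)
    then show ?case
      by (meson UnionE UnionI subsetD subsetI)
  next
    case (Basis s)
    then obtain U where U: "s = Spec - U" "openin zariski U" "compactin zariski U"
      by blast
    obtain G where G: "finite G" "U = \<Union>(basic_open ` G)"
      by (rule compact_open_zariski_finite_union[OF U(2,3)])
    have "G \<subseteq> P \<and> zero_locus G \<subseteq> s" if "P \<in> s" for P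
      using that U(1) G(2) unfolding basic_open_def zero_locus_def by blast
    then show ?case
      using G(1) by blast
  qed simp
  then show ?thesis
    using assms(2) that by blast
qed

lemma topspace_Max_inverse: "topspace Max_inverse = MaxSpec"
proof -
  have "Spec \<in> {Spec - U | U. openin zariski U \<and> compactin zariski U}"
    by (metis (mono_tags, lifting) Diff_empty compactin_empty mem_Collect_eq openin_empty)
  then have "topspace inverse_topology = Spec"
    unfolding inverse_topology_def by auto
  then show ?thesis
    unfolding Max_inverse_def using MaxSpec_subset_Spec by auto
qed

lemma openin_Max_inverse_imp_zero_locus_nbhd:
  assumes "openin Max_inverse S" "M \<in> S"
  obtains F where "finite F" "F \<subseteq> M" "{N \<in> MaxSpec. F \<subseteq> N} \<subseteq> S"
proof -
  obtain T where T: "openin inverse_topology T" "S = T \<inter> MaxSpec"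
    using assms(1) unfolding Max_inverse_def openin_subtopology by blast
  then obtain F where "finite F" "F \<subseteq> M" "zero_locus F \<subseteq> T"
    using assms(2) openin_inverse_topology_imp_zero_locus_nbhd by blast
  then show ?thesis
    using that T(2) MaxSpec_subset_Spec unfolding zero_locus_def by blast
qed

lemma euclidean_int_eq_discrete_topology: "(euclidean :: int topology) = discrete_topology UNIV"
  by (metis discrete_topology_unique open_discrete open_openin topspace_euclidean)

lemma continuous_map_add_monoid:
  fixes f g :: "'a \<Rightarrow> 'b::topological_monoid_add"
  shows "continuous_map X euclidean f \<Longrightarrow> continuous_map X euclidean g \<Longrightarrow>
    continuous_map X euclidean (\<lambda>x. f x + g x)"
  by (simp add: continuous_map_atin tendsto_add)

lemma continuous_map_sum_list:
  fixes f :: "'i \<Rightarrow> 'a \<Rightarrow> 'b::topological_monoid_add"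
  shows "(\<And>i. i \<in> set xs \<Longrightarrow> continuous_map X euclidean (f i)) \<Longrightarrow>
    continuous_map X euclidean (\<lambda>x. \<Sum>i\<leftarrow>xs. f i x)"
  by (induction xs) (simp_all add: continuous_map_add_monoid)

lemma continuous_ideal_iff: "continuous_ideal I \<longleftrightarrow> continuous_map Max_inverse euclidean (nu I)"
  by (simp add: continuous_ideal_def euclidean_int_eq_discrete_topology)

lemma openin_nu_preimage:
  "continuous_ideal I \<Longrightarrow> openin Max_inverse {M \<in> MaxSpec. nu I M \<in> C}"
  unfolding continuous_ideal_def continuous_map_def topspace_Max_inverse by simp

section \<open>Continuity of valuation functions\<close>

lemma continuous_ideal_ideal_prod_list:
  assumes AD: "almost_Dedekind TYPE('a::idom)"
    and Js: "\<And>J. J \<in> set Js \<Longrightarrow> is_ideal J \<and> J \<noteq> {0::'a} \<and> continuous_ideal J"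
  shows "continuous_ideal (ideal_prod_list Js)"
  unfolding continuous_ideal_iff
proof (rule continuous_map_eq)
  show "continuous_map Max_inverse euclidean (\<lambda>M. \<Sum>J\<leftarrow>Js. nu J M)"
    using Js by (intro continuous_map_sum_list) (simp add: continuous_ideal_iff)
next
  fix M :: "'a set" assume "M \<in> topspace Max_inverse"
  then have "M \<in> MaxSpec"
    by (simp add: topspace_Max_inverse)
  then interpret almost_Dedekind_max_ideal M
    by (rule almost_Dedekind_max_ideal_MaxSpec[OF AD])
  show "(\<Sum>J\<leftarrow>Js. nu J M) = nu (ideal_prod_list Js) M"
    using nu_ideal_prod_list Js by simp
qed

definition frequently_contained :: "(nat \<Rightarrow> 'a set) \<Rightarrow> 'a set \<Rightarrow> bool" where
  "frequently_contained Ms K \<longleftrightarrow> (\<forall>F. finite F \<and> F \<subseteq> K \<longrightarrow> infinite {k. F \<subseteq> Ms k})"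

lemma frequently_containedD:
  "frequently_contained Ms K \<Longrightarrow> finite F \<Longrightarrow> F \<subseteq> K \<Longrightarrow> infinite {k. F \<subseteq> Ms k}"
  unfolding frequently_contained_def by blast

lemma maximal_frequently_contained_imp_prime:
  fixes Ms :: "nat \<Rightarrow> 'a::idom set"
  assumes primes: "\<And>k. prime_ideal (Ms k)"
    and P: "is_ideal P" "frequently_contained Ms P"
    and max: "\<And>K. is_ideal K \<Longrightarrow> P \<subseteq> K \<Longrightarrow> frequently_contained Ms K \<Longrightarrow> K = P"
  shows "prime_ideal P"
proof -
  have "1 \<notin> P"
  proof
    assume "1 \<in> P"
    then have "infinite {k. {1} \<subseteq> Ms k}"
      by (intro frequently_containedD[OF P(2)]) auto
    then show False
      using prime_ideal_one_notin[OF primes] by simp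
  qed
  have escape: "\<exists>F. finite F \<and> F \<subseteq> P \<and> finite {k. F \<subseteq> Ms k \<and> a \<in> Ms k}" if "a \<notin> P" for a
  proof -
    have "\<not> frequently_contained Ms (ideal_adjoin P a)"
      using max[OF is_ideal_ideal_adjoin[OF P(1)] subset_ideal_adjoin] mem_ideal_adjoin[OF P(1), of a] that
      by auto
    then obtain G where G: "finite G" "G \<subseteq> ideal_adjoin P a" "finite {k. G \<subseteq> Ms k}"
      unfolding frequently_contained_def by blast
    have "\<forall>y\<in>G. \<exists>p r. p \<in> P \<and> y = p + r * a"
      using G(2) ideal_adjoinE by (metis subsetD)
    then obtain p r where pr: "\<And>y. y \<in> G \<Longrightarrow> p y \<in> P \<and> y = p y + r y * a"
      by metis
    have "{k. p ` G \<subseteq> Ms k \<and> a \<in> Ms k} \<subseteq> {k. G \<subseteq> Ms k}"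
    proof safe
      fix k y assume k: "p ` G \<subseteq> Ms k" "a \<in> Ms k" and "y \<in> G"
      then have "p y + r y * a \<in> Ms k"
        using primes[of k] is_ideal_add is_ideal_mult_left unfolding prime_ideal_def by blast
      then show "y \<in> Ms k"
        using pr \<open>y \<in> G\<close> by metis
    qed
    then have "finite {k. p ` G \<subseteq> Ms k \<and> a \<in> Ms k}"
      using G(3) finite_subset by blast
    moreover have "finite (p ` G)" "p ` G \<subseteq> P"
      using G(1) pr by auto
    ultimately show ?thesis
      by blast
  qed
  show ?thesis
    unfolding prime_ideal_def
  proof (intro conjI allI impI)
    show "is_ideal P" "P \<noteq> UNIV"
      using P(1) \<open>1 \<notin> P\<close> by auto
  next
    fix a b assume ab: "a * b \<in> P"
    show "a \<in> P \<or> b \<in> P"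
    proof (rule ccontr)
      assume "\<not> (a \<in> P \<or> b \<in> P)"
      then obtain F G where F: "finite F" "F \<subseteq> P" "finite {k. F \<subseteq> Ms k \<and> a \<in> Ms k}"
        and G: "finite G" "G \<subseteq> P" "finite {k. G \<subseteq> Ms k \<and> b \<in> Ms k}"
        using escape by meson
      have "infinite {k. F \<union> G \<union> {a * b} \<subseteq> Ms k}"
        using F G ab by (intro frequently_containedD[OF P(2)]) auto
      moreover have "{k. F \<union> G \<union> {a * b} \<subseteq> Ms k}
          \<subseteq> {k. F \<subseteq> Ms k \<and> a \<in> Ms k} \<union> {k. G \<subseteq> Ms k \<and> b \<in> Ms k}"
        using prime_ideal_mult[OF primes] by blast
      ultimately show False
        using F(3) G(3) by (meson finite_Un finite_subset)
    qed
  qed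
qed

text \<open>\<open>P\<close> is a cluster point of the sequence \<open>Ms\<close> in the inverse topology; this replaces
  the compactness of the maximal spectrum in that topology.\<close>

lemma ex_prime_ideal_frequently_contained:
  fixes Ms :: "nat \<Rightarrow> 'a::idom set"
  assumes primes: "\<And>k. prime_ideal (Ms k)"
  obtains P where "prime_ideal P" "(\<Inter>k. Ms k) \<subseteq> P" "frequently_contained Ms P"
proof -
  define \<A> where "\<A> = {K. is_ideal K \<and> (\<Inter>k. Ms k) \<subseteq> K \<and> frequently_contained Ms K}"
  have "is_ideal (\<Inter>k. Ms k)"
    using primes by (intro is_ideal_Inter) (auto simp: prime_ideal_def)
  moreover have "frequently_contained Ms (\<Inter>k. Ms k)"
    unfolding frequently_contained_def
  proof (intro allI impI)
    fix F assume "finite F \<and> F \<subseteq> (\<Inter>k. Ms k)"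
    then have "{k. F \<subseteq> Ms k} = UNIV"
      by blast
    then show "infinite {k. F \<subseteq> Ms k}"
      by simp
  qed
  ultimately have "(\<Inter>k. Ms k) \<in> \<A>"
    unfolding \<A>_def by blast
  moreover have "is_ideal K" if "K \<in> \<A>" for K
    using that unfolding \<A>_def by blast
  moreover have "\<Union>Ch \<in> \<A>" if Ch: "Ch \<noteq> {}" "subset.chain \<A> Ch" "is_ideal (\<Union>Ch)" for Ch
  proof -
    have "(\<Inter>k. Ms k) \<subseteq> \<Union>Ch"
      using Ch(1,2) unfolding \<A>_def subset_chain_def by blast
    moreover have "frequently_contained Ms (\<Union>Ch)"
      unfolding frequently_contained_def
    proof (intro allI impI)
      fix F assume F: "finite F \<and> F \<subseteq> \<Union>Ch"
      then obtain B where "B \<in> Ch" "F \<subseteq> B"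
        using finite_subset_Union_chain[OF _ _ Ch(1,2)] by blast
      moreover have "frequently_contained Ms B"
        using \<open>B \<in> Ch\<close> Ch(2) unfolding \<A>_def subset_chain_def by blast
      ultimately show "infinite {k. F \<subseteq> Ms k}"
        using F frequently_containedD by blast
    qed
    ultimately show ?thesis
      using Ch(3) unfolding \<A>_def by blast
  qed
  ultimately obtain P where P: "P \<in> \<A>" and max: "\<And>K. K \<in> \<A> \<Longrightarrow> P \<subseteq> K \<Longrightarrow> K = P"
    by (metis empty_iff ideal_Zorn)
  have "prime_ideal P"
  proof (rule maximal_frequently_contained_imp_prime[OF primes])
    show "is_ideal P" "frequently_contained Ms P"
      using P unfolding \<A>_def by blast+
    show "K = P" if "is_ideal K" "P \<subseteq> K" "frequently_contained Ms K" for K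
    proof (rule max)
      show "K \<in> \<A>"
        using that P unfolding \<A>_def by blast
    qed (rule that(2))
  qed
  then show ?thesis
    using that P unfolding \<A>_def by blast
qed

lemma continuous_ideal_nu_bounded:
  assumes AD: "almost_Dedekind TYPE('a::idom)" and I: "is_ideal I" "I \<noteq> {0::'a}"
    and cont: "continuous_ideal I"
  shows "bdd_above (nu I ` MaxSpec)"
proof (rule ccontr)
  assume unbounded: "\<not> bdd_above (nu I ` MaxSpec)"
  have "\<exists>M. M \<in> MaxSpec \<and> int k < nu I M" for k :: nat
    using unbounded bdd_aboveI2[of MaxSpec "nu I" "int k"] by (meson not_le)
  then obtain Ms where Ms: "\<And>k. Ms k \<in> MaxSpec" "\<And>k. int k < nu I (Ms k)"
    by metis
  have "I \<subseteq> Ms k" for k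
  proof -
    interpret almost_Dedekind_max_ideal "Ms k"
      by (rule almost_Dedekind_max_ideal_MaxSpec[OF AD Ms(1)])
    show ?thesis
      using nu_pos_iff_subset[OF I] Ms(2)[of k] by simp
  qed
  obtain x where x: "x \<in> I" "x \<noteq> 0"
    by (rule nonzero_idealE[OF I])
  obtain P where P: "prime_ideal P" "(\<Inter>k. Ms k) \<subseteq> P" "frequently_contained Ms P"
    using ex_prime_ideal_frequently_contained prime_ideal_MaxSpec[OF Ms(1)] by metis
  have "x \<in> P"
    using P(2) \<open>\<And>k. I \<subseteq> Ms k\<close> x(1) by blast
  then have "P \<in> {N \<in> MaxSpec. nu I N \<in> {nu I P}}"
    using nonzero_prime_ideal_imp_maximal[OF AD P(1) _ x(2)] unfolding MaxSpec_def by blast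
  then obtain F where F: "finite F" "F \<subseteq> P"
      and nbhd: "{N \<in> MaxSpec. F \<subseteq> N} \<subseteq> {N \<in> MaxSpec. nu I N \<in> {nu I P}}"
    by (rule openin_Max_inverse_imp_zero_locus_nbhd[OF openin_nu_preimage[OF cont]])
  have "infinite {k. F \<subseteq> Ms k}"
    using frequently_containedD[OF P(3) F] .
  then obtain k where "nat (nu I P) < k" "F \<subseteq> Ms k"
    unfolding infinite_nat_iff_unbounded by blast
  then have "nu I (Ms k) = nu I P"
    using nbhd Ms(1) by blast
  then show False
    using Ms(2)[of k] \<open>nat (nu I P) < k\<close> by linarith
qed

section \<open>Level ideals\<close>

definition level_ideal :: "'a::idom set \<Rightarrow> nat \<Rightarrow> 'a set" where
  "level_ideal I t = \<Inter>{M \<in> MaxSpec. int t \<le> nu I M}"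

lemma radical_level_ideal: "radical_ideal (level_ideal I t)"
  unfolding level_ideal_def by (rule radical_ideal_Inter_primes) (simp add: prime_ideal_MaxSpec)

lemma is_ideal_level_ideal: "is_ideal (level_ideal I t)"
  using radical_level_ideal unfolding radical_ideal_def by blast

lemma level_ideal_mono: "s \<le> t \<Longrightarrow> level_ideal I s \<subseteq> level_ideal I t"
  unfolding level_ideal_def by (intro Inter_anti_mono) auto

lemma ideal_subset_level_ideal:
  assumes AD: "almost_Dedekind TYPE('a::idom)" and I: "is_ideal I" "I \<noteq> {0::'a}" and "1 \<le> t"
  shows "I \<subseteq> level_ideal I t"
  unfolding level_ideal_def
proof (rule Inter_greatest)
  fix M assume M: "M \<in> {M \<in> MaxSpec. int t \<le> nu I M}"
  interpret almost_Dedekind_max_ideal M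
    using almost_Dedekind_max_ideal_MaxSpec[OF AD] M by blast
  show "I \<subseteq> M"
    using nu_pos_iff_subset[OF I] M \<open>1 \<le> t\<close> by simp
qed

lemma level_ideal_nonzero:
  assumes "almost_Dedekind TYPE('a::idom)" "is_ideal I" "I \<noteq> {0::'a}" "1 \<le> t"
  shows "level_ideal I t \<noteq> {0}"
proof -
  obtain i where "i \<in> I" "i \<noteq> 0"
    by (rule nonzero_idealE[OF assms(2,3)])
  then have "i \<in> level_ideal I t"
    using ideal_subset_level_ideal[OF assms] by blast
  then show ?thesis
    using \<open>i \<noteq> 0\<close> by blast
qed

text \<open>Continuity gives a neighbourhood \<open>{N. F \<subseteq> N}\<close> of \<open>M\<close> on which \<open>nu I < t\<close>; the
  element \<open>r\<close> below then lies in every maximal ideal \<open>N\<close> with \<open>t \<le> nu I N\<close>.\<close>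

lemma level_ideal_not_subset:
  assumes AD: "almost_Dedekind TYPE('a::idom)" and I: "is_ideal I" "I \<noteq> {0::'a}"
    and cont: "continuous_ideal I" and t: "1 \<le> t"
    and M: "M \<in> MaxSpec" "nu I M < int t"
  shows "\<not> level_ideal I t \<subseteq> M"
proof
  assume sub: "level_ideal I t \<subseteq> M"
  interpret almost_Dedekind_max_ideal M
    by (rule almost_Dedekind_max_ideal_MaxSpec[OF AD M(1)])
  have "M \<in> {N \<in> MaxSpec. nu I N \<in> {..<int t}}"
    using M by simp
  then obtain F where F: "finite F" "F \<subseteq> M"
      and nbhd: "{N \<in> MaxSpec. F \<subseteq> N} \<subseteq> {N \<in> MaxSpec. nu I N \<in> {..<int t}}"
    by (rule openin_Max_inverse_imp_zero_locus_nbhd[OF openin_nu_preimage[OF cont]])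
  obtain r where r: "r \<notin> M" "\<forall>f\<in>F. r * f ^ nat (nu I M) \<in> I"
    by (rule ex_notin_mult_powers_mem[OF I F])
  have "r \<in> N" if N: "N \<in> MaxSpec" "int t \<le> nu I N" for N
  proof (rule ccontr)
    assume "r \<notin> N"
    interpret N: almost_Dedekind_max_ideal N
      by (rule almost_Dedekind_max_ideal_MaxSpec[OF AD N(1)])
    have "\<not> F \<subseteq> N"
      using nbhd N by auto
    then obtain f where "f \<in> F" "f \<notin> N"
      by blast
    then have "r * f ^ nat (nu I M) \<notin> N"
      using \<open>r \<notin> N\<close> prime_ideal_MaxSpec[OF N(1)] prime_ideal_mult prime_ideal_power by metis
    then have "\<not> I \<subseteq> N"
      using r(2) \<open>f \<in> F\<close> by blast
    then show False
      using N.nu_pos_iff_subset[OF I] N(2) t by simp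
  qed
  then have "r \<in> level_ideal I t"
    unfolding level_ideal_def by blast
  then show False
    using sub r(1) by blast
qed

lemma nu_level_ideal:
  assumes AD: "almost_Dedekind TYPE('a::idom)" and I: "is_ideal I" "I \<noteq> {0::'a}"
    and cont: "continuous_ideal I" and t: "1 \<le> t" and M: "M \<in> MaxSpec"
  shows "nu (level_ideal I t) M = of_bool (int t \<le> nu I M)"
proof -
  interpret almost_Dedekind_max_ideal M
    by (rule almost_Dedekind_max_ideal_MaxSpec[OF AD M])
  have J: "is_ideal (level_ideal I t)" "level_ideal I t \<noteq> {0}"
    using is_ideal_level_ideal level_ideal_nonzero[OF AD I t] by blast+
  show ?thesis
  proof (cases "int t \<le> nu I M")
    case True
    then have "level_ideal I t \<subseteq> M"
      unfolding level_ideal_def using M by blast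
    then show ?thesis
      using nu_radical_ideal[OF radical_level_ideal J(2)] True by simp
  next
    case False
    then show ?thesis
      using level_ideal_not_subset[OF AD I cont t M] nu_pos_iff_subset[OF J] nu_nonneg[OF J] by simp
  qed
qed

lemma continuous_level_ideal:
  assumes "almost_Dedekind TYPE('a::idom)" "is_ideal I" "I \<noteq> {0::'a}" "continuous_ideal I" "1 \<le> t"
  shows "continuous_ideal (level_ideal I t)"
  unfolding continuous_ideal_def
proof (rule continuous_map_eq)
  show "continuous_map Max_inverse (discrete_topology UNIV) ((\<lambda>n. of_bool (int t \<le> n)) \<circ> nu I)"
    using assms(4) unfolding continuous_ideal_def by (rule continuous_map_compose) simp
  show "((\<lambda>n. of_bool (int t \<le> n)) \<circ> nu I) M = nu (level_ideal I t) M" if "M \<in> topspace Max_inverse" for M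
    using nu_level_ideal[OF assms] that by (simp add: topspace_Max_inverse)
qed

lemma sum_list_of_bool_le_upt:
  "0 \<le> n \<Longrightarrow> (\<Sum>t\<leftarrow>[1..<k + 1]. of_bool (int t \<le> n)) = min n (int k)"
  by (induction k) auto

lemma ideal_eq_prod_level_ideals:
  assumes AD: "almost_Dedekind TYPE('a::idom)" and I: "is_ideal I" "I \<noteq> {0::'a}"
    and cont: "continuous_ideal I" and bound: "\<And>M. M \<in> MaxSpec \<Longrightarrow> nu I M \<le> int k"
  shows "I = ideal_prod_list (map (level_ideal I) [1..<k + 1])"
proof -
  let ?Js = "map (level_ideal I) [1..<k + 1]"
  have Js: "is_ideal J \<and> J \<noteq> {0}" if "J \<in> set ?Js" for J
    using that is_ideal_level_ideal level_ideal_nonzero[OF AD I] by (auto simp del: upt_Suc)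
  show ?thesis
  proof (rule ideal_eq_of_nu_eq[OF AD I is_ideal_ideal_prod_list ideal_prod_list_nonzero[OF Js]])
    fix M :: "'a set" assume "maximal_ideal M"
    then have M: "M \<in> MaxSpec"
      unfolding MaxSpec_def by simp
    interpret almost_Dedekind_max_ideal M
      by (rule almost_Dedekind_max_ideal_MaxSpec[OF AD M])
    have "nu (ideal_prod_list ?Js) M = (\<Sum>J\<leftarrow>?Js. nu J M)"
      by (rule nu_ideal_prod_list) (rule Js)
    also have "\<dots> = (\<Sum>t\<leftarrow>[1..<k + 1]. nu (level_ideal I t) M)"
      by (simp only: map_map comp_def)
    also have "\<dots> = (\<Sum>t\<leftarrow>[1..<k + 1]. of_bool (int t \<le> nu I M))"
      using nu_level_ideal[OF AD I cont _ M] by (intro arg_cong[where f = sum_list] map_cong) auto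
    also have "\<dots> = nu I M"
      using sum_list_of_bool_le_upt[OF nu_nonneg[OF I]] bound[OF M] by simp
    finally show "nu I M = nu (ideal_prod_list ?Js) M"
      by simp
  qed
qed

lemma continuous_ideal_imp_sorted_radical_factorization:
  assumes AD: "almost_Dedekind TYPE('a::idom)" and I: "is_ideal I" "I \<noteq> {0::'a}"
    and cont: "continuous_ideal I"
  shows "\<exists>Js. Js \<noteq> [] \<and> (\<forall>J\<in>set Js. is_ideal J \<and> J \<noteq> {0} \<and> radical_ideal J \<and> continuous_ideal J)
           \<and> sorted_wrt (\<subseteq>) Js \<and> I = ideal_prod_list Js"
proof -
  obtain K where "\<forall>n \<in> nu I ` MaxSpec. n \<le> K"
    using continuous_ideal_nu_bounded[OF AD I cont] unfolding bdd_above_def by blast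
  then have bound: "\<And>M. M \<in> MaxSpec \<Longrightarrow> nu I M \<le> int (max 1 (nat K))"
    by fastforce
  show ?thesis
  proof (intro exI conjI ballI)
    let ?Js = "map (level_ideal I) [1..<max 1 (nat K) + 1]"
    show "?Js \<noteq> []"
      by simp
    show "sorted_wrt (\<subseteq>) ?Js"
      unfolding sorted_wrt_map by (rule sorted_wrt_mono_rel[OF _ sorted_wrt_upt]) (simp add: level_ideal_mono)
    show "I = ideal_prod_list ?Js"
      by (rule ideal_eq_prod_level_ideals[OF AD I cont bound])
    fix J assume "J \<in> set ?Js"
    then obtain t where "1 \<le> t" "J = level_ideal I t"
      by (auto simp del: upt_Suc)
    then show "is_ideal J" "J \<noteq> {0}" "radical_ideal J" "continuous_ideal J"
      using is_ideal_level_ideal level_ideal_nonzero[OF AD I] radical_level_ideal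
        continuous_level_ideal[OF AD I cont] by simp_all
  qed
qed

theorem proposition3p8:
  fixes I :: "'a::idom set"
  assumes "almost_Dedekind TYPE('a)"
    and "is_ideal I" and "I \<noteq> {0}"
  shows "(continuous_ideal I
           \<longleftrightarrow> (\<exists>Js. Js \<noteq> [] \<and> (\<forall>J\<in>set Js. is_ideal J \<and> J \<noteq> {0} \<and> radical_ideal J \<and> continuous_ideal J)
                     \<and> sorted_wrt (\<subseteq>) Js \<and> I = ideal_prod_list Js))
       \<and> (continuous_ideal I
           \<longleftrightarrow> (\<exists>Js. Js \<noteq> [] \<and> (\<forall>J\<in>set Js. is_ideal J \<and> J \<noteq> {0} \<and> radical_ideal J \<and> continuous_ideal J)
                     \<and> I = ideal_prod_list Js))"
proof -
  have "continuous_ideal I"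
    if "\<exists>Js. Js \<noteq> [] \<and> (\<forall>J\<in>set Js. is_ideal J \<and> J \<noteq> {0} \<and> radical_ideal J \<and> continuous_ideal J)
              \<and> I = ideal_prod_list Js"
    using that continuous_ideal_ideal_prod_list[OF assms(1)] by metis
  then show ?thesis
    using continuous_ideal_imp_sorted_radical_factorization[OF assms] by blast
qed

end
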